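(* Let $\mathrm{cleaf}_3:\mathbb{R}\to\mathbb{R}$ be the leaf function of basis $3$. For every real $l$, writing $c=\mathrm{cleaf}_3(l)$, $$\Bigl(\mathrm{cleaf}_3\Bigl(\frac l2\Bigr)\Bigr)^2=\frac{c^2-1}{4c^2+2}+\frac{\sqrt3\sqrt{1+c^2+c^4}}{2\sqrt{1+4c^2+4c^4}}+\frac{\sqrt3\,c\sqrt{-3-6c^2+2\sqrt3\,(1+2c^2)\sqrt{1+c^2+c^4}}}{2(1+2c^2)^{3/2}}.$$
   Context: For a natural number $n$, the leaf function $\mathrm{cleaf}_n:\mathbb{R}\to\mathbb{R}$ is the solution of $\frac{\mathrm{d}^2r}{\mathrm{d}l^2}=-n\,r^{2n-1}$ with $r(0)=1$, $r'(0)=0$. *)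

theory Defs
  imports "HOL-Analysis.Analysis"
begin

definition is_cleaf :: "nat \<Rightarrow> (real \<Rightarrow> real) \<Rightarrow> bool" where
  "is_cleaf n r \<longleftrightarrow> (\<exists>r'. (\<forall>l. (r has_real_derivative r' l) (at l)) \<and>
       (\<forall>l. (r' has_real_derivative (- real n * r l ^ (2 * n - 1))) (at l)) \<and>
       r 0 = 1 \<and> r' 0 = 0)"

definition cleaf :: "nat \<Rightarrow> real \<Rightarrow> real" where
  "cleaf n = (THE r. is_cleaf n r)"

end

theory Submission
  imports Defs
begin

(* Energy conservation confines every solution of r'' = -n r^(2n-1), r(0) = 1, r'(0) = 0 to
   [-1, 1], where the force is Lipschitz; so the solution is unique (Gronwall), and it exists
   globally because it coincides with the Picard solution for the force truncated outside [-1, 1].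
   For n = 3 and A(t) = cleaf_3(t/2)^2, differentiating twice and using r'^2 + r^6 = 1 shows that
   N(A)/sqrt(Q(A)), for the explicit polynomials N = dup_N and Q = dup_Q, solves the same initial
   value problem, so cleaf_3(l) = N(A)/sqrt(Q(A)) with
   A = cleaf_3(l/2)^2 in [0, 1]; solving this equation for A gives the half-argument formula. *)

section \<open>Autonomous second-order equations\<close>

lemma second_order_ode_energy:
  fixes x v g V :: "real \<Rightarrow> real"
  assumes x: "\<And>t. (x has_real_derivative v t) (at t)"
    and v: "\<And>t. (v has_real_derivative g (x t)) (at t)"
    and V: "\<And>z. (V has_real_derivative - 2 * g z) (at z)"
  shows "v t ^ 2 + V (x t) = v 0 ^ 2 + V (x 0)"
proof -
  have "((\<lambda>t. v t ^ 2 + V (x t)) has_real_derivative 0) (at s)" for s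
    by (rule derivative_eq_intros DERIV_chain2[OF V x] x v refl)+ (simp add: algebra_simps)
  then show ?thesis by (intro DERIV_isconst_all) blast
qed

lemma gronwall_zero:
  fixes w w' :: "real \<Rightarrow> real"
  assumes "\<And>t. (w has_real_derivative w' t) (at t)" "\<And>t. \<bar>w' t\<bar> \<le> K * w t"
    and "\<And>t. 0 \<le> w t" "w 0 = 0"
  shows "w t = 0"
proof -
  have forward: "u s = 0"
    if u: "\<And>t. (u has_real_derivative u' t) (at t)" and u': "\<And>t. \<bar>u' t\<bar> \<le> K * u t"
      and "\<And>t. 0 \<le> u t" "u 0 = 0" "0 \<le> s" for u u' :: "real \<Rightarrow> real" and s
  proof -
    have "u s * exp (- K * s) \<le> u 0 * exp (- K * 0)"
    proof (rule DERIV_nonpos_imp_nonincreasing[OF \<open>0 \<le> s\<close>])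
      fix t
      have "((\<lambda>t. u t * exp (- K * t)) has_real_derivative (u' t - K * u t) * exp (- K * t)) (at t)"
        by (rule derivative_eq_intros u refl)+ (simp add: algebra_simps)
      moreover have "(u' t - K * u t) * exp (- K * t) \<le> 0"
        using u'[of t] by (intro mult_nonpos_nonneg) auto
      ultimately show "\<exists>y. ((\<lambda>t. u t * exp (- K * t)) has_real_derivative y) (at t) \<and> y \<le> 0"
        by blast
    qed
    then show ?thesis using \<open>u 0 = 0\<close> \<open>0 \<le> u s\<close> by (simp add: mult_le_0_iff)
  qed
  show ?thesis
  proof (cases "0 \<le> t")
    case True
    then show ?thesis by (rule forward[OF assms])
  next
    case False
    have "((\<lambda>s. w (- s)) has_real_derivative - w' (- s)) (at s)" for s
      using DERIV_chain2[OF assms(1) DERIV_minus[OF DERIV_ident]] by simp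
    then have "w (- (- t)) = 0"
      using forward[of "\<lambda>s. w (- s)" "\<lambda>s. - w' (- s)" "- t"] assms(2-4) False by simp
    then show ?thesis by simp
  qed
qed

lemma second_order_ode_unique:
  fixes x v y w g :: "real \<Rightarrow> real"
  assumes x: "\<And>t. (x has_real_derivative v t) (at t)"
    and v: "\<And>t. (v has_real_derivative g (x t)) (at t)"
    and y: "\<And>t. (y has_real_derivative w t) (at t)"
    and w: "\<And>t. (w has_real_derivative g (y t)) (at t)"
    and lip: "L-lipschitz_on S g" and xS: "\<And>t. x t \<in> S" and yS: "\<And>t. y t \<in> S"
    and "x 0 = y 0" "v 0 = w 0"
  shows "x t = y t"
proof -
  define d where "d t = (x t - y t) ^ 2 + (v t - w t) ^ 2" for t
  define d' where
    "d' t = 2 * (x t - y t) * (v t - w t) + 2 * (v t - w t) * (g (x t) - g (y t))" for t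
  have "(d has_real_derivative d' t) (at t)" for t
    unfolding d_def[abs_def] d'_def
    by (rule derivative_eq_intros x v y w refl)+ (simp add: algebra_simps)
  moreover have "\<bar>d' t\<bar> \<le> (1 + L) * d t" for t
  proof -
    let ?a = "\<bar>x t - y t\<bar>" and ?b = "\<bar>v t - w t\<bar>"
    have L: "0 \<le> L" using lip by (rule lipschitz_on_nonneg)
    have "\<bar>g (x t) - g (y t)\<bar> \<le> L * ?a"
      using lipschitz_onD[OF lip xS yS] by (simp add: dist_real_def)
    have "\<bar>d' t\<bar> \<le> \<bar>2 * (x t - y t) * (v t - w t)\<bar> + \<bar>2 * (v t - w t) * (g (x t) - g (y t))\<bar>"
      unfolding d'_def by (rule abs_triangle_ineq)
    also have "\<dots> = 2 * ?a * ?b + 2 * ?b * \<bar>g (x t) - g (y t)\<bar>"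
      by (simp only: abs_mult abs_numeral)
    also have "\<dots> \<le> 2 * ?a * ?b + 2 * ?b * (L * ?a)"
      by (intro add_left_mono mult_left_mono \<open>\<bar>g (x t) - g (y t)\<bar> \<le> L * ?a\<close>) auto
    also have "\<dots> = (1 + L) * (2 * ?a * ?b)" by (simp add: algebra_simps)
    also have "\<dots> \<le> (1 + L) * (?a ^ 2 + ?b ^ 2)"
      using L sum_squares_bound[of ?a ?b] by (intro mult_left_mono) (auto simp: power2_eq_square)
    finally show ?thesis by (simp add: d_def)
  qed
  moreover have "0 \<le> d s" for s by (simp add: d_def)
  moreover have "d 0 = 0" using \<open>x 0 = y 0\<close> \<open>v 0 = w 0\<close> by (simp add: d_def)
  ultimately have "d t = 0" by (rule gronwall_zero)
  then show ?thesis by (simp add: d_def)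
qed

section \<open>Global existence by Picard iteration\<close>

lemma has_integral_monomial:
  fixes t :: real
  assumes "0 \<le> t"
  shows "((\<lambda>s. s ^ n) has_integral t ^ Suc n / Suc n) {0..t}"
proof -
  have "((\<lambda>s. s ^ n) has_integral t ^ Suc n / Suc n - 0 ^ Suc n / Suc n) {0..t}"
  proof (rule fundamental_theorem_of_calculus[OF assms])
    fix s
    have "((\<lambda>s. s ^ Suc n / Suc n) has_real_derivative real (Suc n) * s ^ n / Suc n) (at s)"
      using DERIV_pow[of "Suc n" s] by (intro DERIV_cdivide) simp
    then have "((\<lambda>s. s ^ Suc n / Suc n) has_real_derivative s ^ n) (at s)"
      by (simp del: of_nat_Suc)
    then show "((\<lambda>s. s ^ Suc n / Suc n) has_vector_derivative s ^ n) (at s within {0..t})"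
      by (simp add: has_real_derivative_iff_has_vector_derivative[symmetric]
          has_field_derivative_at_within)
  qed
  then show ?thesis by simp
qed

lemma integral_equation_limit:
  fixes f :: "nat \<Rightarrow> real \<Rightarrow> real"
  assumes lim: "uniform_limit {0..t} f l sequentially" and cont: "\<And>n. continuous_on {0..t} (f n)"
    and y: "(\<lambda>n. c + integral {0..t} (f n)) \<longlonglongrightarrow> y"
  shows "y = c + integral {0..t} l"
proof -
  obtain I J where I: "\<And>n. (f n has_integral I n) {0..t}" and J: "(l has_integral J) {0..t}"
    and IJ: "I \<longlonglongrightarrow> J"
    using uniform_limit_integral[OF lim cont] by auto
  have "(\<lambda>n. c + integral {0..t} (f n)) \<longlonglongrightarrow> c + J"
    using IJ by (simp add: integral_unique[OF I] tendsto_add)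
  with y show ?thesis
    using LIMSEQ_unique integral_unique[OF J] by metis
qed

lemma at_within_atLeast_eq: "0 \<le> t \<Longrightarrow> at t within {0..t + 1} = at (t :: real) within {0..}"
  by (rule at_within_nhd[where S = "{..<t + 1}"]) auto

lemma has_real_derivative_integral_equation:
  assumes "\<And>b. continuous_on {0..b} f" "\<And>t. 0 \<le> t \<Longrightarrow> F t = c + integral {0..t} f" "0 \<le> t"
  shows "(F has_real_derivative f t) (at t within {0..})"
proof -
  have "((\<lambda>u. c + integral {0..u} f) has_vector_derivative f t) (at t within {0..t + 1})"
    using has_vector_derivative_add[OF has_vector_derivative_const
        integral_has_vector_derivative[OF assms(1), of t "t + 1"]] assms(3)
    by simp
  then have "(F has_vector_derivative f t) (at t within {0..t + 1})"
    by (rule has_vector_derivative_transform[rotated 2]) (use assms in auto)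
  then show ?thesis
    unfolding has_real_derivative_iff_has_vector_derivative at_within_atLeast_eq[OF assms(3)] .
qed

locale picard_iteration =
  fixes g :: "real \<Rightarrow> real" and L x0 v0 :: real
  assumes lipschitz: "L-lipschitz_on UNIV g"
begin

fun picard_x :: "nat \<Rightarrow> real \<Rightarrow> real" and picard_v :: "nat \<Rightarrow> real \<Rightarrow> real" where
  "picard_x 0 t = x0"
| "picard_x (Suc n) t = x0 + integral {0..t} (picard_v n)"
| "picard_v 0 t = v0"
| "picard_v (Suc n) t = v0 + integral {0..t} (\<lambda>s. g (picard_x n s))"

declare picard_x.simps(2) [simp del] picard_v.simps(2) [simp del]

lemma continuous_on_g: "continuous_on S g"
  using lipschitz_on_continuous_on[OF lipschitz] continuous_on_subset by blast

lemma continuous_on_picard: "continuous_on {0..b} (picard_x n) \<and> continuous_on {0..b} (picard_v n)"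
proof (induction n)
  case 0
  show ?case by (simp add: picard_x.simps(1)[abs_def] picard_v.simps(1)[abs_def])
next
  case (Suc n)
  have "continuous_on {0..b} (\<lambda>s. g (picard_x n s))"
    using Suc continuous_on_compose2[OF continuous_on_g] by blast
  with Suc show ?case
    unfolding picard_x.simps(2)[abs_def] picard_v.simps(2)[abs_def]
    by (intro conjI continuous_intros indefinite_integral_continuous_1
        integrable_continuous_interval) auto
qed

lemma integrable_picard:
  "picard_v n integrable_on {0..t}" "(\<lambda>s. g (picard_x n s)) integrable_on {0..t}"
  using continuous_on_picard[of t n] continuous_on_compose2[OF continuous_on_g]
  by (auto intro!: integrable_continuous_interval)

definition M :: real where "M = max \<bar>v0\<bar> \<bar>g x0\<bar>"
definition K :: real where "K = max 1 L"

definition picard_bound :: "nat \<Rightarrow> real \<Rightarrow> real" where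
  "picard_bound n t = M * K ^ n * t ^ Suc n / fact (Suc n)"

lemma K_ge_1: "1 \<le> K" and L_le_K: "L \<le> K"
  by (simp_all add: K_def)

lemma picard_bound_nonneg: "0 \<le> t \<Longrightarrow> 0 \<le> picard_bound n t"
  using K_ge_1 by (simp add: picard_bound_def M_def)

lemma picard_bound_mono: "0 \<le> t \<Longrightarrow> t \<le> b \<Longrightarrow> picard_bound n t \<le> picard_bound n b"
  using K_ge_1 unfolding picard_bound_def M_def
  by (intro divide_right_mono mult_left_mono power_mono) auto

lemma has_integral_picard_bound:
  assumes "0 \<le> t"
  shows "(picard_bound n has_integral picard_bound (Suc n) t / K) {0..t}"
proof -
  have "((\<lambda>s. M * K ^ n / fact (Suc n) * s ^ Suc n) has_integral
      M * K ^ n / fact (Suc n) * (t ^ Suc (Suc n) / Suc (Suc n))) {0..t}"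
    by (intro has_integral_mult_right has_integral_monomial assms)
  moreover have "M * K ^ n / fact (Suc n) * (t ^ Suc (Suc n) / Suc (Suc n))
      = picard_bound (Suc n) t / K"
    using K_ge_1 by (simp add: picard_bound_def field_simps del: of_nat_Suc)
  ultimately show ?thesis by (simp add: picard_bound_def[abs_def] field_simps)
qed

lemma picard_step_bound:
  assumes "0 \<le> t"
  shows "\<bar>picard_x (Suc n) t - picard_x n t\<bar> \<le> picard_bound n t
    \<and> \<bar>picard_v (Suc n) t - picard_v n t\<bar> \<le> picard_bound n t"
  using assms
proof (induction n arbitrary: t)
  case 0
  have "picard_v 0 = (\<lambda>s. v0)" by auto
  then have "picard_x 1 t - picard_x 0 t = v0 * t" "picard_v 1 t - picard_v 0 t = g x0 * t"
    using 0 by (simp_all add: picard_x.simps(2) picard_v.simps(2) mult.commute)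
  moreover have "\<bar>c * t\<bar> \<le> picard_bound 0 t" if "\<bar>c\<bar> \<le> M" for c
    using that 0 by (simp add: picard_bound_def abs_mult mult_right_mono)
  ultimately show ?case by (simp only: One_nat_def) (simp add: M_def)
next
  case (Suc n)
  have int: "picard_bound n integrable_on {0..t}"
    "integral {0..t} (picard_bound n) = picard_bound (Suc n) t / K"
    using has_integral_picard_bound[OF Suc.prems] by blast+
  have b: "0 \<le> picard_bound (Suc n) t" by (rule picard_bound_nonneg[OF Suc.prems])
  have K: "picard_bound (Suc n) t / K \<le> picard_bound (Suc n) t"
    "L * (picard_bound (Suc n) t / K) \<le> picard_bound (Suc n) t"
    using mult_right_mono[OF K_ge_1 b] mult_right_mono[OF L_le_K b] K_ge_1
    by (simp_all add: pos_divide_le_eq mult.commute)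
  have "\<bar>picard_x (Suc (Suc n)) t - picard_x (Suc n) t\<bar>
      = norm (integral {0..t} (\<lambda>s. picard_v (Suc n) s - picard_v n s))"
    by (simp add: picard_x.simps(2) integral_diff[OF integrable_picard(1) integrable_picard(1)])
  also have "\<dots> \<le> integral {0..t} (picard_bound n)"
    by (rule integral_norm_bound_integral)
      (use Suc.IH int in \<open>auto intro!: integrable_diff integrable_picard\<close>)
  finally have x: "\<bar>picard_x (Suc (Suc n)) t - picard_x (Suc n) t\<bar> \<le> picard_bound (Suc n) t"
    using int K by simp
  have "\<bar>picard_v (Suc (Suc n)) t - picard_v (Suc n) t\<bar>
      = norm (integral {0..t} (\<lambda>s. g (picard_x (Suc n) s) - g (picard_x n s)))"
    by (simp add: picard_v.simps(2) integral_diff[OF integrable_picard(2) integrable_picard(2)])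
  also have "\<dots> \<le> integral {0..t} (\<lambda>s. L * picard_bound n s)"
  proof (rule integral_norm_bound_integral)
    fix s assume s: "s \<in> {0..t}"
    have "norm (g (picard_x (Suc n) s) - g (picard_x n s)) \<le> L * \<bar>picard_x (Suc n) s - picard_x n s\<bar>"
      using lipschitz_onD[OF lipschitz] by (simp add: dist_real_def)
    also have "\<dots> \<le> L * picard_bound n s"
      using Suc.IH[of s] s lipschitz_on_nonneg[OF lipschitz] by (auto intro: mult_left_mono)
    finally show "norm (g (picard_x (Suc n) s) - g (picard_x n s)) \<le> L * picard_bound n s" .
  qed (use int in \<open>auto intro!: integrable_diff integrable_picard integrable_on_mult_right\<close>)
  finally have v: "\<bar>picard_v (Suc (Suc n)) t - picard_v (Suc n) t\<bar> \<le> picard_bound (Suc n) t"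
    using int K by simp
  from x v show ?case ..
qed


lemma summable_picard_bound: "summable (\<lambda>n. picard_bound n b)"
proof -
  have "summable (\<lambda>n. inverse (fact (Suc n)) * (K * b) ^ Suc n)"
    using summable_exp[of "K * b"] by (subst summable_Suc_iff)
  then have "summable (\<lambda>n. M / K * (inverse (fact (Suc n)) * (K * b) ^ Suc n))"
    by (rule summable_mult)
  moreover have "M / K * (inverse (fact (Suc n)) * (K * b) ^ Suc n) = picard_bound n b" for n
    using K_ge_1 by (simp add: picard_bound_def power_mult_distrib field_simps del: fact_Suc)
  ultimately show ?thesis by simp
qed

lemma uniform_limit_telescoping:
  fixes f :: "nat \<Rightarrow> real \<Rightarrow> real"
  assumes "\<And>n t. 0 \<le> t \<Longrightarrow> \<bar>f (Suc n) t - f n t\<bar> \<le> picard_bound n t"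
  shows "uniform_limit {0..b} f (\<lambda>t. f 0 t + (\<Sum>i. f (Suc i) t - f i t)) sequentially"
proof -
  have "uniform_limit {0..b} (\<lambda>n t. \<Sum>i<n. f (Suc i) t - f i t)
      (\<lambda>t. \<Sum>i. f (Suc i) t - f i t) sequentially"
    by (rule Weierstrass_m_test[OF _ summable_picard_bound])
      (use assms picard_bound_mono order_trans in fastforce)
  then have "uniform_limit {0..b} (\<lambda>n t. f 0 t + (\<Sum>i<n. f (Suc i) t - f i t))
      (\<lambda>t. f 0 t + (\<Sum>i. f (Suc i) t - f i t)) sequentially"
    by (intro uniform_limit_add uniform_limit_const)
  moreover have "f 0 t + (\<Sum>i<n. f (Suc i) t - f i t) = f n t" for n t
    using sum_lessThan_telescope[of "\<lambda>i. f i t" n] by simp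
  ultimately show ?thesis by simp
qed

definition solution_x :: "real \<Rightarrow> real" where
  "solution_x t = x0 + (\<Sum>i. picard_x (Suc i) t - picard_x i t)"

definition solution_v :: "real \<Rightarrow> real" where
  "solution_v t = v0 + (\<Sum>i. picard_v (Suc i) t - picard_v i t)"

lemma uniform_limit_picard:
  "uniform_limit {0..b} picard_x solution_x sequentially"
  "uniform_limit {0..b} picard_v solution_v sequentially"
  using uniform_limit_telescoping[of picard_x b] uniform_limit_telescoping[of picard_v b]
    picard_step_bound
  by (simp_all add: solution_x_def[abs_def] solution_v_def[abs_def])

lemma continuous_on_solution:
  "continuous_on {0..b} solution_x" "continuous_on {0..b} (\<lambda>t. g (solution_x t))"
  "continuous_on {0..b} solution_v"
proof -
  show x: "continuous_on {0..b} solution_x"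
    by (rule uniform_limit_theorem[OF always_eventually uniform_limit_picard(1)])
      (simp_all add: continuous_on_picard)
  show "continuous_on {0..b} (\<lambda>t. g (solution_x t))"
    using continuous_on_compose2[OF continuous_on_g x] by blast
  show "continuous_on {0..b} solution_v"
    by (rule uniform_limit_theorem[OF always_eventually uniform_limit_picard(2)])
      (simp_all add: continuous_on_picard)
qed

lemma solution_integral_equations:
  assumes "0 \<le> t"
  shows "solution_x t = x0 + integral {0..t} solution_v"
    and "solution_v t = v0 + integral {0..t} (\<lambda>s. g (solution_x s))"
proof -
  have t: "t \<in> {0..t}" using assms by simp
  have "(\<lambda>n. picard_x (Suc n) t) \<longlonglongrightarrow> solution_x t"
    using tendsto_uniform_limitI[OF uniform_limit_picard(1) t] by (rule LIMSEQ_Suc)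
  then show "solution_x t = x0 + integral {0..t} solution_v"
    by (intro integral_equation_limit[OF uniform_limit_picard(2)])
      (use continuous_on_picard in \<open>simp_all add: picard_x.simps(2)\<close>)
  have "uniform_limit {0..t} (\<lambda>n s. g (picard_x n s)) (g \<circ> solution_x) sequentially"
    by (rule uniform_limit_compose[OF uniform_limit_picard(1)
        lipschitz_on_uniformly_continuous[OF lipschitz]]) auto
  then have lim: "uniform_limit {0..t} (\<lambda>n s. g (picard_x n s)) (\<lambda>s. g (solution_x s)) sequentially"
    by (simp add: o_def)
  have cont: "continuous_on {0..t} (\<lambda>s. g (picard_x n s))" for n
    using continuous_on_compose2[OF continuous_on_g] continuous_on_picard by blast
  have "(\<lambda>n. picard_v (Suc n) t) \<longlonglongrightarrow> solution_v t"
    using tendsto_uniform_limitI[OF uniform_limit_picard(2) t] by (rule LIMSEQ_Suc)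
  then show "solution_v t = v0 + integral {0..t} (\<lambda>s. g (solution_x s))"
    by (intro integral_equation_limit[OF lim cont]) (simp add: picard_v.simps(2))
qed

lemma solution_initial: "solution_x 0 = x0" "solution_v 0 = v0"
  using solution_integral_equations[of 0] by simp_all

lemma solution_has_derivative:
  assumes "0 \<le> t"
  shows "(solution_x has_real_derivative solution_v t) (at t within {0..})"
    and "(solution_v has_real_derivative g (solution_x t)) (at t within {0..})"
  using has_real_derivative_integral_equation[OF continuous_on_solution(3)
      solution_integral_equations(1) assms]
    has_real_derivative_integral_equation[OF continuous_on_solution(2)
      solution_integral_equations(2) assms]
  by simp_all

end

lemma has_real_derivative_reflect_glue:
  fixes F F' G G' :: "real \<Rightarrow> real"
  assumes F: "\<And>t. 0 \<le> t \<Longrightarrow> (F has_real_derivative F' t) (at t within {0..})"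
    and G: "\<And>t. 0 \<le> t \<Longrightarrow> (G has_real_derivative G' t) (at t within {0..})"
    and "F 0 = G 0" "F' 0 = - G' 0"
  shows "((\<lambda>t. if t \<in> {..<0} then G (- t) else F t) has_real_derivative
    (if t \<in> {..<0} then - G' (- t) else F' t)) (at t)"
proof -
  have closures: "closure {..<0} \<inter> closure {0..} = {0::real}"
    and left: "{..<0} \<union> (closure {..<0} \<inter> closure {0..}) = {..0::real}"
    and right: "{0..} \<union> (closure {..<0} \<inter> closure {0..}) = {0::real..}"
    by auto
  have reflected: "((\<lambda>t. G (- t)) has_real_derivative - G' (- t)) (at t within {..0})"
    if "t \<le> 0" for t
  proof -
    have "uminus ` {..0} = {0::real..}" by (force simp: image_iff intro: bexI[of _ "- _"])
    then have "(G has_real_derivative G' (- t)) (at (- t) within uminus ` {..0})"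
      using G that by simp
    from DERIV_image_chain[OF this DERIV_minus[OF DERIV_ident]] show ?thesis
      by (simp add: o_def)
  qed
  have "((\<lambda>t. if t \<in> {..<0} then G (- t) else F t) has_vector_derivative
      (if t \<in> {..<0} then - G' (- t) else F' t)) (at t within {..<0} \<union> {0..})"
  proof (rule has_vector_derivative_If_within_closures[where f = "\<lambda>t. G (- t)"
        and f' = "\<lambda>t. - G' (- t)" and g = F and g' = F' and S = "{..<0}" and T = "{0..}"])
    show "((\<lambda>t. G (- t)) has_vector_derivative - G' (- t))
        (at t within {..<0} \<union> (closure {..<0} \<inter> closure {0..}))"
      if "t \<in> {..<0} \<union> (closure {..<0} \<inter> closure {0..})"
      using that reflected
      unfolding left has_real_derivative_iff_has_vector_derivative[symmetric] by simp
    show "(F has_vector_derivative F' t) (at t within {0..} \<union> (closure {..<0} \<inter> closure {0..}))"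
      if "t \<in> {0..} \<union> (closure {..<0} \<inter> closure {0..})"
      using that F
      unfolding right has_real_derivative_iff_has_vector_derivative[symmetric] by simp
    show "G (- t) = F t" "- G' (- t) = F' t" if "t \<in> closure {..<0}" "t \<in> closure {0..}"
      using that closures assms(3,4) by auto
  qed auto
  moreover have "{..<0} \<union> {0..} = (UNIV :: real set)" by auto
  ultimately show ?thesis
    by (simp add: has_real_derivative_iff_has_vector_derivative)
qed

text \<open>On the negative half-line the solution is the forward solution with initial velocity
  \<open>- v0\<close>, run backwards.\<close>

theorem second_order_ode_solvable:
  fixes g :: "real \<Rightarrow> real"
  assumes "L-lipschitz_on UNIV g"
  obtains x v where "\<And>t. (x has_real_derivative v t) (at t)"
    and "\<And>t. (v has_real_derivative g (x t)) (at t)" and "x 0 = x0" and "v 0 = v0"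
proof -
  interpret fw: picard_iteration g L x0 v0 by unfold_locales fact
  interpret bw: picard_iteration g L x0 "- v0" by unfold_locales fact
  define x where "x t = (if t \<in> {..<0} then bw.solution_x (- t) else fw.solution_x t)" for t
  define v where "v t = (if t \<in> {..<0} then - bw.solution_v (- t) else fw.solution_v t)" for t
  show thesis
  proof
    show "(x has_real_derivative v t) (at t)" for t
      unfolding x_def[abs_def] v_def
      by (rule has_real_derivative_reflect_glue)
        (simp_all add: fw.solution_has_derivative bw.solution_has_derivative
          fw.solution_initial bw.solution_initial)
    have dv: "(v has_real_derivative
        (if t \<in> {..<0} then - (- g (bw.solution_x (- t))) else g (fw.solution_x t))) (at t)" for t
      unfolding v_def[abs_def]
      by (rule has_real_derivative_reflect_glue)
        (simp_all add: DERIV_minus fw.solution_has_derivative bw.solution_has_derivative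
          fw.solution_initial bw.solution_initial)
    show "(v has_real_derivative g (x t)) (at t)" for t
      using dv[of t] by (cases "t < 0") (simp_all add: x_def)
    show "x 0 = x0" "v 0 = v0"
      by (simp_all add: x_def v_def fw.solution_initial)
  qed
qed

section \<open>The leaf functions\<close>

lemma lipschitz_on_clip: "1-lipschitz_on UNIV (\<lambda>x :: real. max (-1) (min 1 x))"
  by (intro lipschitz_onI) (auto simp: dist_real_def max_def min_def)

lemma has_real_derivative_abs: "x \<noteq> 0 \<Longrightarrow> (abs has_real_derivative sgn x) (at (x :: real))"
proof -
  assume "x \<noteq> 0"
  have "0 < x ^ 2" using \<open>x \<noteq> 0\<close> by simp
  moreover have "((\<lambda>x. x ^ 2) has_real_derivative 2 * x) (at x)"
    using DERIV_pow[of 2 x UNIV] by simp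
  ultimately have
    "((\<lambda>x. sqrt (x ^ 2)) has_real_derivative inverse (sqrt (x ^ 2)) / 2 * (2 * x)) (at x)"
    by (rule DERIV_chain2[OF DERIV_real_sqrt])
  moreover have "inverse (sqrt (x ^ 2)) / 2 * (2 * x) = sgn x"
    using \<open>x \<noteq> 0\<close> by (simp add: sgn_if field_simps)
  ultimately show ?thesis
    by (simp add: real_sqrt_abs[abs_def])
qed

lemma lipschitz_on_power_unit_interval: "(real m)-lipschitz_on {-1..1} (\<lambda>x :: real. x ^ m)"
  using norm_power_diff[of "_ :: real" _ m] by (intro lipschitz_onI) (auto simp: dist_real_def)

lemma is_cleaf_energy:
  assumes "\<And>l. (r has_real_derivative r' l) (at l)"
    and "\<And>l. (r' has_real_derivative - real n * r l ^ (2 * n - 1)) (at l)"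
  shows "r' l ^ 2 + r l ^ (2 * n) = r' 0 ^ 2 + r 0 ^ (2 * n)"
proof (rule second_order_ode_energy[OF assms])
  show "((\<lambda>z. z ^ (2 * n)) has_real_derivative - 2 * (- real n * z ^ (2 * n - 1))) (at z)" for z
    using DERIV_pow[of "2 * n" z UNIV] by (simp add: mult.assoc)
qed

lemma is_cleaf_bounded:
  assumes "is_cleaf n r" "0 < n"
  shows "\<bar>r l\<bar> \<le> 1"
proof -
  obtain r' where "\<And>l. (r has_real_derivative r' l) (at l)"
    "\<And>l. (r' has_real_derivative - real n * r l ^ (2 * n - 1)) (at l)" "r 0 = 1" "r' 0 = 0"
    using assms(1) unfolding is_cleaf_def by blast
  then have "r' l ^ 2 + (r l ^ 2) ^ n = 1"
    using is_cleaf_energy by (simp add: power_mult)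
  then have "(r l ^ 2) ^ n \<le> 1"
    using zero_le_power2[of "r' l"] by linarith
  then have "r l ^ 2 \<le> 1"
    using power_le_one_iff[of "r l ^ 2" n] assms(2) by simp
  then show ?thesis
    by (simp add: abs_square_le_1)
qed

lemma is_cleaf_unique:
  assumes "0 < n" "is_cleaf n r" "is_cleaf n s"
  shows "r = s"
proof
  fix l
  obtain r' where r: "\<And>l. (r has_real_derivative r' l) (at l)"
    "\<And>l. (r' has_real_derivative - real n * r l ^ (2 * n - 1)) (at l)" "r 0 = 1" "r' 0 = 0"
    using assms(2) unfolding is_cleaf_def by blast
  obtain s' where s: "\<And>l. (s has_real_derivative s' l) (at l)"
    "\<And>l. (s' has_real_derivative - real n * s l ^ (2 * n - 1)) (at l)" "s 0 = 1" "s' 0 = 0"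
    using assms(3) unfolding is_cleaf_def by blast
  have lip: "(\<bar>- real n\<bar> * real (2 * n - 1))-lipschitz_on {-1..1}
      (\<lambda>x :: real. - real n * x ^ (2 * n - 1))"
    by (intro lipschitz_on_cmult_real lipschitz_on_power_unit_interval)
  have "r l \<in> {-1..1}" "s l \<in> {-1..1}" for l
    using is_cleaf_bounded[OF assms(2,1)] is_cleaf_bounded[OF assms(3,1)] by (auto simp: abs_le_iff)
  then show "r l = s l"
    by (rule second_order_ode_unique[OF r(1,2) s(1,2) lip]) (simp_all add: r(3,4) s(3,4))
qed

text \<open>The force \<open>- n x ^ (2 n - 1)\<close> is made globally Lipschitz by clipping \<open>x\<close> to
  \<open>[-1, 1]\<close>; this is a potential for the clipped force, and since it exceeds 1 outside
  \<open>[-1, 1]\<close>, energy 1 keeps the solution where clipping has no effect.\<close>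

definition leaf_potential :: "nat \<Rightarrow> real \<Rightarrow> real" where
  "leaf_potential n x = (if \<bar>x\<bar> \<le> 1 then x ^ (2 * n) else 1 + 2 * real n * (\<bar>x\<bar> - 1))"

lemma has_real_derivative_leaf_potential:
  assumes "0 < n"
  shows "(leaf_potential n has_real_derivative
    2 * real n * max (-1) (min 1 x) ^ (2 * n - 1)) (at x)"
proof -
  let ?S = "{-1..1::real}" and ?T = "- {-1..1::real}"
  have boundary: "closure ?S \<inter> closure ?T = {-1, 1}"
    by (auto simp: closure_complement)
  have odd: "odd (2 * n - 1)" using assms by presburger
  have "((\<lambda>x. if x \<in> ?S then x ^ (2 * n) else 1 + 2 * real n * (\<bar>x\<bar> - 1)) has_vector_derivative
      (if x \<in> ?S then 2 * real n * x ^ (2 * n - 1) else 2 * real n * sgn x)) (at x within ?S \<union> ?T)"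
  proof (rule has_vector_derivative_If_within_closures[where S = ?S and T = ?T])
    show "((\<lambda>x. x ^ (2 * n)) has_vector_derivative 2 * real n * x ^ (2 * n - 1))
        (at x within ?S \<union> (closure ?S \<inter> closure ?T))"
      using DERIV_pow[of "2 * n" x]
      by (simp add: has_real_derivative_iff_has_vector_derivative[symmetric]
          has_field_derivative_at_within)
    assume "x \<in> ?T \<union> (closure ?S \<inter> closure ?T)"
    then have "x \<noteq> 0" unfolding boundary by auto
    then show "((\<lambda>x. 1 + 2 * real n * (\<bar>x\<bar> - 1)) has_vector_derivative 2 * real n * sgn x)
        (at x within ?T \<union> (closure ?S \<inter> closure ?T))"
      using DERIV_add[OF DERIV_const
          DERIV_cmult[OF DERIV_diff[OF has_real_derivative_abs[OF \<open>x \<noteq> 0\<close>] DERIV_const]],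
          of 1 "2 * real n" 1]
      by (simp add: has_real_derivative_iff_has_vector_derivative[symmetric]
          has_field_derivative_at_within)
  next
    assume "x \<in> closure ?S" "x \<in> closure ?T"
    then have "x = -1 \<or> x = 1" using boundary by blast
    then show "x ^ (2 * n) = 1 + 2 * real n * (\<bar>x\<bar> - 1)"
      and "2 * real n * x ^ (2 * n - 1) = 2 * real n * sgn x"
      using odd by (auto simp: power_mult)
  qed auto
  moreover have "(if x \<in> ?S then 2 * real n * x ^ (2 * n - 1) else 2 * real n * sgn x)
      = 2 * real n * max (-1) (min 1 x) ^ (2 * n - 1)"
    using assms by (auto simp: sgn_if power_mult odd_pos)
  moreover have
    "leaf_potential n = (\<lambda>x. if x \<in> ?S then x ^ (2 * n) else 1 + 2 * real n * (\<bar>x\<bar> - 1))"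
    by (auto simp: leaf_potential_def abs_le_iff)
  ultimately show ?thesis
    by (simp add: has_real_derivative_iff_has_vector_derivative)
qed

lemma leaf_potential_gt_one:
  assumes "0 < n" "1 < \<bar>x\<bar>"
  shows "1 < leaf_potential n x"
  using assms by (simp add: leaf_potential_def)

lemma is_cleaf_exists:
  assumes "0 < n"
  shows "\<exists>r. is_cleaf n r"
proof -
  define f where "f x = - real n * max (-1) (min 1 x) ^ (2 * n - 1)" for x :: real
  have "(\<bar>- real n\<bar> * (real (2 * n - 1) * 1))-lipschitz_on UNIV f"
    unfolding f_def
    by (intro lipschitz_on_cmult_real lipschitz_on_compose[OF lipschitz_on_clip, unfolded o_def]
        lipschitz_on_subset[OF lipschitz_on_power_unit_interval]) auto
  then obtain x v where x: "\<And>t. (x has_real_derivative v t) (at t)"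
    and v: "\<And>t. (v has_real_derivative f (x t)) (at t)" and "x 0 = 1" "v 0 = 0"
    by (rule second_order_ode_solvable[of _ f 1 0]) auto
  have "(leaf_potential n has_real_derivative - 2 * f z) (at z)" for z
    using has_real_derivative_leaf_potential[OF assms] by (simp add: f_def mult.assoc)
  moreover have "leaf_potential n 1 = 1" by (simp add: leaf_potential_def)
  ultimately have energy: "v t ^ 2 + leaf_potential n (x t) = 1" for t
    using second_order_ode_energy[OF x v] \<open>x 0 = 1\<close> \<open>v 0 = 0\<close> by simp
  have "leaf_potential n (x t) \<le> 1" for t
    using energy[of t] zero_le_power2[of "v t"] by linarith
  then have bounded: "\<bar>x t\<bar> \<le> 1" for t
    using leaf_potential_gt_one[OF assms] not_le by blast
  have "f (x t) = - real n * x t ^ (2 * n - 1)" for t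
    using bounded[of t] by (simp add: f_def abs_le_iff)
  then have "is_cleaf n x"
    unfolding is_cleaf_def using x v \<open>x 0 = 1\<close> \<open>v 0 = 0\<close> by metis
  then show ?thesis by blast
qed

lemma cleaf_eqI:
  assumes "0 < n" "is_cleaf n r"
  shows "cleaf n = r"
  unfolding cleaf_def
  using assms is_cleaf_unique by blast

lemma is_cleaf_cleaf: "0 < n \<Longrightarrow> is_cleaf n (cleaf n)"
  using is_cleaf_exists cleaf_eqI by metis

section \<open>The duplication formula for cleaf 3\<close>

text \<open>With \<open>A = cleaf 3 t ^ 2\<close> one has \<open>cleaf 3 (2 * t) = dup_N A / sqrt (dup_Q A)\<close>; \<open>dup_P\<close>
  appears in the derivative of the right-hand side.\<close>

definition dup_N :: "real \<Rightarrow> real" where "dup_N A = 2 * A ^ 2 + 2 * A - 1"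
definition dup_Q :: "real \<Rightarrow> real" where "dup_Q A = 1 + 8 * A + 8 * A ^ 3 - 8 * A ^ 4"
definition dup_P :: "real \<Rightarrow> real" where "dup_P A = 4 * A ^ 4 - 4 * A ^ 3 + 6 * A ^ 2 + 2 * A + 1"

lemma dup_Q_ge_1:
  assumes "0 \<le> A" "A \<le> 1"
  shows "1 \<le> dup_Q A"
proof -
  have "0 \<le> A * (1 - A ^ 3)" "0 \<le> A ^ 3"
    using assms by (simp_all add: power_le_one)
  then show ?thesis unfolding dup_Q_def by (simp add: algebra_simps power_def)
qed

lemma dup_P_pos:
  assumes "0 \<le> A" "A \<le> 1"
  shows "0 < dup_P A"
proof -
  have "A ^ 3 \<le> A ^ 2" "0 \<le> A ^ 4" "0 \<le> A ^ 2"
    using assms by (simp_all add: power_decreasing)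
  then show ?thesis unfolding dup_P_def using assms by linarith
qed

text \<open>\<open>a\<close> and \<open>b\<close> play the roles of \<open>cleaf 3 (t / 2)\<close> and its derivative at \<open>t / 2\<close>.\<close>

locale halved_leaf3 =
  fixes a b :: "real \<Rightarrow> real"
  assumes a_deriv: "\<And>t. (a has_real_derivative b t / 2) (at t)"
    and b_deriv: "\<And>t. (b has_real_derivative - 3 * a t ^ 5 / 2) (at t)"
    and energy: "\<And>t. b t ^ 2 + a t ^ 6 = 1"
begin

definition A :: "real \<Rightarrow> real" where "A t = a t ^ 2"
definition X :: "real \<Rightarrow> real" where "X t = a t * b t"
definition s :: "real \<Rightarrow> real" where "s t = sqrt (dup_Q (A t))"

lemma A_bounds: "0 \<le> A t" "A t \<le> 1"
proof -
  have "a t ^ 6 \<le> 1"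
    using energy[of t] zero_le_power2[of "b t"] by linarith
  then have "(a t ^ 2) ^ 3 \<le> 1"
    by (simp add: power_mult[symmetric])
  then show "0 \<le> A t" "A t \<le> 1"
    unfolding A_def using power_le_one_iff[OF zero_le_power2[of "a t"], of 3] by simp_all
qed

lemma X_sq: "X t ^ 2 = A t * (1 - A t ^ 3)"
proof -
  have "b t ^ 2 = 1 - a t ^ 6" using energy[of t] by simp
  then show ?thesis unfolding X_def A_def
    by (simp add: power_mult_distrib power_mult[symmetric])
qed

lemma dup_Q_A_ge_1: "1 \<le> dup_Q (A t)"
  using dup_Q_ge_1 A_bounds by blast

lemma s_pos: "0 < s t" and s_sq: "s t ^ 2 = dup_Q (A t)"
  using dup_Q_A_ge_1[of t] by (simp_all add: s_def)

lemma A_deriv: "(A has_real_derivative X t) (at t)"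
  unfolding A_def[abs_def] X_def by (rule derivative_eq_intros a_deriv refl)+ simp

lemma X_deriv: "(X has_real_derivative (1 - 4 * A t ^ 3) / 2) (at t)"
proof -
  have "(X has_real_derivative b t / 2 * b t + - 3 * a t ^ 5 / 2 * a t) (at t)"
    unfolding X_def[abs_def] by (rule DERIV_mult[OF a_deriv b_deriv])
  moreover have "b t / 2 * b t + - 3 * a t ^ 5 / 2 * a t = (1 - 4 * A t ^ 3) / 2"
  proof -
    have "b t ^ 2 = 1 - a t ^ 6" using energy[of t] by simp
    then show ?thesis unfolding A_def
      by (simp add: field_simps power2_eq_square power_mult[symmetric]) (simp add: power_def)
  qed
  ultimately show ?thesis by metis
qed

lemma s_deriv: "(s has_real_derivative (24 * A t ^ 2 - 32 * A t ^ 3 + 8) * X t / (2 * s t)) (at t)"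
proof -
  have "((\<lambda>t. dup_Q (A t)) has_real_derivative (24 * A t ^ 2 - 32 * A t ^ 3 + 8) * X t) (at t)"
    unfolding dup_Q_def by (rule derivative_eq_intros A_deriv refl)+ (simp add: algebra_simps)
  from DERIV_chain2[OF DERIV_real_sqrt this] show ?thesis
    using s_pos[of t] dup_Q_A_ge_1[of t] by (simp add: s_def[abs_def] field_simps)
qed

lemma doubled_deriv:
  "((\<lambda>t. dup_N (A t) / s t) has_real_derivative 6 * X t * dup_P (A t) / s t ^ 3) (at t)"
proof -
  have "((\<lambda>t. dup_N (A t)) has_real_derivative (4 * A t + 2) * X t) (at t)"
    unfolding dup_N_def by (rule derivative_eq_intros A_deriv refl)+ (simp add: algebra_simps)
  then have "((\<lambda>t. dup_N (A t) / s t) has_real_derivative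
      ((4 * A t + 2) * X t * s t - dup_N (A t) * ((24 * A t ^ 2 - 32 * A t ^ 3 + 8) * X t / (2 * s t)))
        / (s t * s t)) (at t)"
    by (rule DERIV_divide[OF _ s_deriv]) (use s_pos[of t] in simp)
  moreover have "((4 * A t + 2) * X t * s t
        - dup_N (A t) * ((24 * A t ^ 2 - 32 * A t ^ 3 + 8) * X t / (2 * s t))) / (s t * s t)
      = X t * ((4 * A t + 2) * s t ^ 2 - dup_N (A t) * (12 * A t ^ 2 - 16 * A t ^ 3 + 4)) / s t ^ 3"
    using s_pos[of t] by (simp add: field_simps power2_eq_square power3_eq_cube)
  moreover have "(4 * A t + 2) * s t ^ 2 - dup_N (A t) * (12 * A t ^ 2 - 16 * A t ^ 3 + 4)
      = 6 * dup_P (A t)"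
    unfolding s_sq dup_N_def dup_Q_def dup_P_def by algebra
  ultimately show ?thesis by (simp add: ac_simps)
qed

lemma doubled_second_deriv:
  "((\<lambda>t. 6 * X t * dup_P (A t) / s t ^ 3) has_real_derivative - 3 * (dup_N (A t) / s t) ^ 5) (at t)"
proof -
  let ?P' = "16 * A t ^ 3 - 12 * A t ^ 2 + 12 * A t + 2"
  let ?Q' = "24 * A t ^ 2 - 32 * A t ^ 3 + 8"
  have dP: "((\<lambda>t. dup_P (A t)) has_real_derivative ?P' * X t) (at t)"
    unfolding dup_P_def by (rule derivative_eq_intros A_deriv refl)+ (simp add: algebra_simps)
  have "((\<lambda>t. 6 * X t * dup_P (A t) / s t ^ 3) has_real_derivative
      ((6 * ((1 - 4 * A t ^ 3) / 2) * dup_P (A t) + 6 * X t * (?P' * X t)) * s t ^ 3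
        - 6 * X t * dup_P (A t) * (3 * s t ^ 2 * (?Q' * X t / (2 * s t)))) / (s t ^ 3 * s t ^ 3)) (at t)"
    by (rule derivative_eq_intros X_deriv s_deriv dP refl)+
      (use s_pos[of t] in \<open>simp_all add: algebra_simps\<close>)
  moreover have "((6 * ((1 - 4 * A t ^ 3) / 2) * dup_P (A t) + 6 * X t * (?P' * X t)) * s t ^ 3
        - 6 * X t * dup_P (A t) * (3 * s t ^ 2 * (?Q' * X t / (2 * s t)))) / (s t ^ 3 * s t ^ 3)
      = ((3 * (1 - 4 * A t ^ 3) * dup_P (A t) + 6 * X t ^ 2 * ?P') * s t ^ 2
        - 9 * X t ^ 2 * dup_P (A t) * ?Q') / s t ^ 5"
    using s_pos[of t]
    by (simp add: field_simps power2_eq_square power3_eq_cube) (simp add: algebra_simps power_def)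
  moreover have "(3 * (1 - 4 * A t ^ 3) * dup_P (A t) + 6 * X t ^ 2 * ?P') * s t ^ 2
        - 9 * X t ^ 2 * dup_P (A t) * ?Q' = - 3 * dup_N (A t) ^ 5"
    unfolding s_sq X_sq dup_N_def dup_Q_def dup_P_def by algebra
  ultimately show ?thesis by (simp add: power_divide)
qed

end

lemma cleaf3_doubling:
  "cleaf 3 l = dup_N (cleaf 3 (l / 2) ^ 2) / sqrt (dup_Q (cleaf 3 (l / 2) ^ 2))"
proof -
  obtain r' where r: "\<And>l. (cleaf 3 has_real_derivative r' l) (at l)"
    "\<And>l. (r' has_real_derivative - 3 * cleaf 3 l ^ 5) (at l)" "cleaf 3 0 = 1" "r' 0 = 0"
    using is_cleaf_cleaf[of 3] unfolding is_cleaf_def by auto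
  have half: "((\<lambda>t. t / 2) has_real_derivative 1 / 2) (at t)" for t :: real
    by (rule DERIV_cdivide[OF DERIV_ident])
  interpret halved_leaf3 "\<lambda>t. cleaf 3 (t / 2)" "\<lambda>t. r' (t / 2)"
  proof
    show "((\<lambda>t. cleaf 3 (t / 2)) has_real_derivative r' (t / 2) / 2) (at t)" for t
      using DERIV_chain2[OF r(1) half] by simp
    show "((\<lambda>t. r' (t / 2)) has_real_derivative - 3 * cleaf 3 (t / 2) ^ 5 / 2) (at t)" for t
      using DERIV_chain2[OF r(2) half] by simp
    have "(r' has_real_derivative - real 3 * cleaf 3 l ^ (2 * 3 - 1)) (at l)" for l
      using r(2) by simp
    from is_cleaf_energy[OF r(1) this] show "r' (t / 2) ^ 2 + cleaf 3 (t / 2) ^ 6 = 1" for t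
      using r(3,4) by simp
  qed
  have "is_cleaf 3 (\<lambda>t. dup_N (A t) / s t)"
    unfolding is_cleaf_def
  proof (intro exI conjI allI)
    show "((\<lambda>t. dup_N (A t) / s t) has_real_derivative 6 * X t * dup_P (A t) / s t ^ 3) (at t)" for t
      by (rule doubled_deriv)
    show "((\<lambda>t. 6 * X t * dup_P (A t) / s t ^ 3) has_real_derivative
        - real 3 * (dup_N (A t) / s t) ^ (2 * 3 - 1)) (at t)" for t
      using doubled_second_deriv by simp
  qed (simp_all add: A_def X_def s_def r(3,4) dup_N_def dup_Q_def)
  then have "cleaf 3 = (\<lambda>t. dup_N (A t) / s t)"
    by (rule cleaf_eqI[rotated]) simp
  then have "cleaf 3 l = dup_N (A l) / s l"
    by (rule fun_cong)
  then show ?thesis by (simp add: A_def s_def)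
qed

lemma real_sqrt_mult_self_left: "0 \<le> a \<Longrightarrow> sqrt a * (sqrt a * x) = a * x"
  by (simp add: mult.assoc[symmetric])

lemma doubling_radicals:
  fixes A c :: real
  assumes A: "0 \<le> A" "A \<le> 1" and c: "c = dup_N A / sqrt (dup_Q A)"
  shows "sqrt (1 + c\<^sup>2 + c ^ 4) = sqrt 3 * dup_P A / dup_Q A"
    and "sqrt (- 3 - 6 * c\<^sup>2 + 2 * sqrt 3 * (1 + 2 * c\<^sup>2) * sqrt (1 + c\<^sup>2 + c ^ 4))
      = sqrt 3 * sqrt (1 + 2 * c\<^sup>2) / sqrt (dup_Q A) * (4 * A ^ 2 - 2 * A + 1)"
proof -
  have q: "1 \<le> dup_Q A" using dup_Q_ge_1[OF A] .
  have c2: "c\<^sup>2 = dup_N A ^ 2 / dup_Q A"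
    using q by (simp add: c power_divide)
  show root: "sqrt (1 + c\<^sup>2 + c ^ 4) = sqrt 3 * dup_P A / dup_Q A"
  proof (rule real_sqrt_unique)
    have "(sqrt 3 * dup_P A / dup_Q A)\<^sup>2 = 3 * dup_P A ^ 2 / dup_Q A ^ 2"
      by (simp add: power_mult_distrib power_divide)
    also have "3 * dup_P A ^ 2 = dup_Q A ^ 2 + dup_N A ^ 2 * dup_Q A + dup_N A ^ 4"
      unfolding dup_P_def dup_Q_def dup_N_def by algebra
    also have "(dup_Q A ^ 2 + dup_N A ^ 2 * dup_Q A + dup_N A ^ 4) / dup_Q A ^ 2
        = 1 + c\<^sup>2 + (c\<^sup>2)\<^sup>2"
      using q unfolding c2 by (simp add: field_simps power2_eq_square power4_eq_xxxx)
    finally show "(sqrt 3 * dup_P A / dup_Q A)\<^sup>2 = 1 + c\<^sup>2 + c ^ 4" by simp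
    show "0 \<le> sqrt 3 * dup_P A / dup_Q A"
      using dup_P_pos[OF A] q by simp
  qed
  have "2 * dup_P A - dup_Q A = (4 * A ^ 2 - 2 * A + 1)\<^sup>2"
    unfolding dup_P_def dup_Q_def by algebra
  moreover have "- 3 - 6 * c\<^sup>2 + 2 * sqrt 3 * (1 + 2 * c\<^sup>2) * sqrt (1 + c\<^sup>2 + c ^ 4)
      = 3 * (1 + 2 * c\<^sup>2) / dup_Q A * (2 * dup_P A - dup_Q A)"
    unfolding root using q by (simp add: field_simps real_sqrt_mult_self_left)
  ultimately have "- 3 - 6 * c\<^sup>2 + 2 * sqrt 3 * (1 + 2 * c\<^sup>2) * sqrt (1 + c\<^sup>2 + c ^ 4)
      = 3 * (1 + 2 * c\<^sup>2) / dup_Q A * (4 * A ^ 2 - 2 * A + 1)\<^sup>2"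
    by simp
  moreover have "0 < 4 * A ^ 2 - 2 * A + 1"
    using zero_le_power2[of "2 * A - 1 / 2"] by (simp add: power2_eq_square algebra_simps)
  moreover have "sqrt (3 * (1 + 2 * c\<^sup>2) / dup_Q A * (4 * A ^ 2 - 2 * A + 1)\<^sup>2)
      = sqrt 3 * sqrt (1 + 2 * c\<^sup>2) / sqrt (dup_Q A) * \<bar>4 * A ^ 2 - 2 * A + 1\<bar>"
    by (simp only: real_sqrt_mult real_sqrt_divide real_sqrt_abs)
  ultimately show "sqrt (- 3 - 6 * c\<^sup>2 + 2 * sqrt 3 * (1 + 2 * c\<^sup>2) * sqrt (1 + c\<^sup>2 + c ^ 4))
      = sqrt 3 * sqrt (1 + 2 * c\<^sup>2) / sqrt (dup_Q A) * (4 * A ^ 2 - 2 * A + 1)"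
    by simp
qed

lemma doubling_inverse:
  fixes A c :: real
  assumes A: "0 \<le> A" "A \<le> 1" and c: "c = dup_N A / sqrt (dup_Q A)"
  shows "A = (c\<^sup>2 - 1) / (4 * c\<^sup>2 + 2)
     + sqrt 3 * sqrt (1 + c\<^sup>2 + c ^ 4) / (2 * sqrt (1 + 4 * c\<^sup>2 + 4 * c ^ 4))
     + sqrt 3 * c * sqrt (- 3 - 6 * c\<^sup>2 + 2 * sqrt 3 * (1 + 2 * c\<^sup>2) * sqrt (1 + c\<^sup>2 + c ^ 4))
       / (2 * (1 + 2 * c\<^sup>2) powr (3 / 2))"
proof -
  define p where "p = 1 + 2 * c\<^sup>2"
  define q where "q = dup_Q A"
  define T where "T = 4 * A ^ 2 - 2 * A + 1"
  have q: "1 \<le> q" unfolding q_def using dup_Q_ge_1[OF A] .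
  have p: "0 < p" unfolding p_def by (simp add: add_pos_nonneg)
  have "sqrt (1 + 4 * c\<^sup>2 + 4 * c ^ 4) = p"
    by (rule real_sqrt_unique)
      (use p in \<open>simp_all add: p_def algebra_simps power2_eq_square power4_eq_xxxx\<close>)
  then have middle: "sqrt 3 * sqrt (1 + c\<^sup>2 + c ^ 4) / (2 * sqrt (1 + 4 * c\<^sup>2 + 4 * c ^ 4))
      = 3 * dup_P A / (2 * p * q)"
    unfolding doubling_radicals(1)[OF A c] q_def[symmetric] using p q
    by (simp add: field_simps real_sqrt_mult_self_left)
  have r2: "sqrt (- 3 - 6 * c\<^sup>2 + 2 * sqrt 3 * (1 + 2 * c\<^sup>2) * sqrt (1 + c\<^sup>2 + c ^ 4))
      = sqrt 3 * sqrt p / sqrt q * T"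
    using doubling_radicals(2)[OF A c] by (simp add: p_def q_def T_def)
  have r3: "(1 + 2 * c\<^sup>2) powr (3 / 2) = p * sqrt p"
  proof -
    have "p powr (3 / 2) = p powr (1 + 1 / 2)" by simp
    also have "\<dots> = p * sqrt p"
      using p by (simp only: powr_add) (simp add: powr_half_sqrt)
    finally show ?thesis by (simp add: p_def)
  qed
  have last: "sqrt 3 * c * sqrt (- 3 - 6 * c\<^sup>2 + 2 * sqrt 3 * (1 + 2 * c\<^sup>2) * sqrt (1 + c\<^sup>2 + c ^ 4))
       / (2 * (1 + 2 * c\<^sup>2) powr (3 / 2))
      = 3 * c * T / (2 * p * sqrt q)"
    unfolding r2 r3 using p q by (simp add: field_simps real_sqrt_mult_self_left)
  have "(c\<^sup>2 - 1) / (4 * c\<^sup>2 + 2) + 3 * dup_P A / (2 * p * q) + 3 * c * T / (2 * p * sqrt q)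
      = (dup_N A ^ 2 - q + 3 * dup_P A + 3 * dup_N A * T) / (2 * (p * q))"
  proof -
    have "c\<^sup>2 = dup_N A ^ 2 / q" using q by (simp add: c q_def power_divide)
    moreover have "4 * c\<^sup>2 + 2 = 2 * p" by (simp add: p_def)
    moreover have "sqrt q * sqrt q = q" using q by simp
    ultimately show ?thesis
      using p q unfolding c q_def[symmetric] by (simp add: field_simps)
  qed
  also have "\<dots> = A"
  proof -
    have "dup_N A ^ 2 - q + 3 * dup_P A + 3 * dup_N A * T = 6 * A * (1 + 8 * A ^ 3)"
      unfolding q_def T_def dup_N_def dup_Q_def dup_P_def by algebra
    moreover have "p * q = 3 * (1 + 8 * A ^ 3)"
    proof -
      have "p * q = q + 2 * dup_N A ^ 2"
        using q by (simp add: p_def c q_def power_divide field_simps)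
      also have "\<dots> = 3 * (1 + 8 * A ^ 3)"
        unfolding q_def dup_N_def dup_Q_def by algebra
      finally show ?thesis .
    qed
    moreover have "0 < 1 + 8 * A ^ 3" using A by (simp add: add_pos_nonneg)
    ultimately show ?thesis by (simp add: field_simps)
  qed
  finally show ?thesis
    using middle last by simp
qed

theorem mainTheorem15:
  fixes l :: real
  defines "c \<equiv> cleaf 3 l"
  shows "(cleaf 3 (l / 2))\<^sup>2 =
     (c\<^sup>2 - 1) / (4 * c\<^sup>2 + 2)
     + sqrt 3 * sqrt (1 + c\<^sup>2 + c ^ 4) / (2 * sqrt (1 + 4 * c\<^sup>2 + 4 * c ^ 4))
     + sqrt 3 * c * sqrt (- 3 - 6 * c\<^sup>2 + 2 * sqrt 3 * (1 + 2 * c\<^sup>2) * sqrt (1 + c\<^sup>2 + c ^ 4))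
       / (2 * (1 + 2 * c\<^sup>2) powr (3 / 2))"
proof (rule doubling_inverse)
  have "\<bar>cleaf 3 (l / 2)\<bar> \<le> 1"
    using is_cleaf_bounded[OF is_cleaf_cleaf] by simp
  then show "0 \<le> (cleaf 3 (l / 2))\<^sup>2" "(cleaf 3 (l / 2))\<^sup>2 \<le> 1"
    by (simp_all add: abs_square_le_1)
  show "c = dup_N ((cleaf 3 (l / 2))\<^sup>2) / sqrt (dup_Q ((cleaf 3 (l / 2))\<^sup>2))"
    unfolding c_def by (rule cleaf3_doubling)
qed

end
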